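(* Let $(X,\mathbb{A},d)$ be a complete $C^*$-algebra valued metric space, where $\mathbb{A}$ is a unital $C^*$-algebra. Let $T,S:X\to X$ be mappings such that $$d(T^n x,S^n y)\preceq (q(x,y)^* )^n\,\delta(x,y)\,q(x,y)^n\quad\text{for all }x,y\in X,\ n\in\mathbb{N},$$ where $q:X\times X\to\mathbb{A}$ satisfies $0\le\|q(x,y)\|<1$ for all $x,y\in X$ and $\delta:X\times X\to\mathbb{A}_+$ is a mapping. Then $T$ and $S$ are both orbitally continuous on $X$ if and only if $T$ and $S$ have a unique common fixed point in $X$.
   Context: $\mathbb{A}$ denotes a unital $C^*$-algebra with unit $I$ and zero $\theta$. An element $a\in\mathbb{A}$ is positive, written $a\succeq\theta$, if $a^*=a$ and its spectrum is contained in $[0,\infty)$; $\mathbb{A}_+$ is the set of positive elements, and $a\succeq b$ means $a-b\succeq\theta$. A $C^*$-algebra valued metric space $(X,\mathbb{A},d)$ is a nonempty set $X$ with $d:X\times X\to\mathbb{A}$ such that for all $x,y,z\in X$: $d(x,y)\succeq\theta$, with $d(x,y)=\theta$ iff $x=y$; $d(x,y)=d(y,x)$; $d(x,y)\preceq d(x,z)+d(z,y)$. A sequence $\{x_n\}$ converges to $x$ if $\|d(x_n,x)\|\to0$, and is Cauchy if $\|d(x_n,x_m)\|\to0$ as $n,m\to\infty$; the space is complete if every Cauchy sequence converges to a point of $X$. A self-map $T$ of $X$ is orbitally continuous at $u\in X$ if for every $x\in X$ and every increasing sequence of positive integers $\{n_i\}$, $\|d(T^{n_i}x,u)\|\to0$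 implies $\|d(T^{n_i+1}x,Tu)\|\to0$ as $i\to\infty$; $T$ is orbitally continuous on $X$ if it is orbitally continuous at every $u\in X$. *)

theory Defs
  imports "HOL-Analysis.Analysis"
begin

text \<open>A unital C*-algebra is modelled as a real Banach algebra with unit
(type class real_normed_algebra_1 + banach) together with an element J
playing the role of i*I (central, J*J = -1, complex-homogeneous norm), which
turns it into a complex unital Banach algebra, and an involution star.\<close>

definition cmul :: "'a::real_normed_algebra_1 \<Rightarrow> complex \<Rightarrow> 'a \<Rightarrow> 'a" where
  "cmul J c x = Re c *\<^sub>R x + Im c *\<^sub>R (J * x)"

definition unital_cstar_algebra ::
  "'a::{real_normed_algebra_1,banach} \<Rightarrow> ('a \<Rightarrow> 'a) \<Rightarrow> bool" where
  "unital_cstar_algebra J star \<longleftrightarrow>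
     (\<forall>x. J * x = x * J) \<and> J * J = - 1 \<and>
     (\<forall>c x. norm (cmul J c x) = cmod c * norm x) \<and>
     (\<forall>x. star (star x) = x) \<and>
     (\<forall>x y. star (x + y) = star x + star y) \<and>
     (\<forall>c x. star (cmul J c x) = cmul J (cnj c) (star x)) \<and>
     (\<forall>x y. star (x * y) = star y * star x) \<and>
     (\<forall>x. norm (star x * x) = (norm x)\<^sup>2)"

definition alg_invertible :: "'a::ring_1 \<Rightarrow> bool" where
  "alg_invertible a \<longleftrightarrow> (\<exists>b. a * b = 1 \<and> b * a = 1)"

definition cspectrum :: "'a::real_normed_algebra_1 \<Rightarrow> 'a \<Rightarrow> complex set" where
  "cspectrum J a = {c. \<not> alg_invertible (a - cmul J c 1)}"

definition cpositive :: "'a::real_normed_algebra_1 \<Rightarrow> ('a \<Rightarrow> 'a) \<Rightarrow> 'a \<Rightarrow> bool" where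
  "cpositive J star a \<longleftrightarrow> star a = a \<and>
     cspectrum J a \<subseteq> {c. Im c = 0 \<and> Re c \<ge> 0}"

definition cle :: "'a::real_normed_algebra_1 \<Rightarrow> ('a \<Rightarrow> 'a) \<Rightarrow> 'a \<Rightarrow> 'a \<Rightarrow> bool" where
  "cle J star a b \<longleftrightarrow> cpositive J star (b - a)"

definition cstar_metric ::
  "'a::real_normed_algebra_1 \<Rightarrow> ('a \<Rightarrow> 'a) \<Rightarrow> 'x set \<Rightarrow> ('x \<Rightarrow> 'x \<Rightarrow> 'a) \<Rightarrow> bool" where
  "cstar_metric J star X d \<longleftrightarrow> X \<noteq> {} \<and>
     (\<forall>x\<in>X. \<forall>y\<in>X. cpositive J star (d x y) \<and> (d x y = 0 \<longleftrightarrow> x = y) \<and> d x y = d y x) \<and>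
     (\<forall>x\<in>X. \<forall>y\<in>X. \<forall>z\<in>X. cle J star (d x y) (d x z + d z y))"

definition cstar_complete :: "'x set \<Rightarrow> ('x \<Rightarrow> 'x \<Rightarrow> 'a::real_normed_vector) \<Rightarrow> bool" where
  "cstar_complete X d \<longleftrightarrow>
     (\<forall>s. (\<forall>n. s n \<in> X) \<longrightarrow>
        (\<forall>e>0. \<exists>N. \<forall>n\<ge>N. \<forall>m\<ge>N. norm (d (s n) (s m)) < e) \<longrightarrow>
        (\<exists>x\<in>X. (\<lambda>n. norm (d (s n) x)) \<longlonglongrightarrow> 0))"

definition orbitally_continuous_at ::
  "'x set \<Rightarrow> ('x \<Rightarrow> 'x \<Rightarrow> 'a::real_normed_vector) \<Rightarrow> ('x \<Rightarrow> 'x) \<Rightarrow> 'x \<Rightarrow> bool" where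
  "orbitally_continuous_at X d T u \<longleftrightarrow>
     (\<forall>x\<in>X. \<forall>ns::nat \<Rightarrow> nat. strict_mono ns \<and> (\<forall>i. ns i > 0) \<longrightarrow>
        (\<lambda>i. norm (d ((T ^^ ns i) x) u)) \<longlonglongrightarrow> 0 \<longrightarrow>
        (\<lambda>i. norm (d ((T ^^ (ns i + 1)) x) (T u))) \<longlonglongrightarrow> 0)"

definition orbitally_continuous ::
  "'x set \<Rightarrow> ('x \<Rightarrow> 'x \<Rightarrow> 'a::real_normed_vector) \<Rightarrow> ('x \<Rightarrow> 'x) \<Rightarrow> bool" where
  "orbitally_continuous X d T \<longleftrightarrow> (\<forall>u\<in>X. orbitally_continuous_at X d T u)"

end

theory Submission
  imports Defs
begin

text \<open>
  Taking norms turns a C*-algebra valued metric into an ordinary metric, because in a unital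
  C*-algebra \<open>0 \<preceq> a \<preceq> b\<close> implies \<open>\<parallel>a\<parallel> \<le> \<parallel>b\<parallel>\<close>. This monotonicity rests on \<open>\<parallel>h\<parallel> = r(h)\<close> for
  self-adjoint \<open>h\<close>, which follows from the C*-identity \<open>\<parallel>h^(2^k)\<parallel> = \<parallel>h\<parallel>^(2^k)\<close> and Cauchy
  estimates for the resolvent \<open>\<mu> \<mapsto> (1 - \<mu> h)\<inverse>\<close> on circles.

  The hypothesis then gives \<open>\<parallel>d(T^n x, S^n y)\<parallel> \<le> \<parallel>\<delta>(x,y)\<parallel> \<parallel>q(x,y)\<parallel>^(2n)\<close>: all \<open>T\<close>- and
  \<open>S\<close>-orbits approach each other geometrically. Comparing \<open>T^n x\<close> and \<open>T^n (T x)\<close> with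
  \<open>S^n x\<close> shows that every \<open>T\<close>-orbit is Cauchy; its limit \<open>u\<close> is also the limit of the
  \<open>S\<close>-orbit, orbital continuity makes \<open>u\<close> a common fixed point, and two common fixed points
  coincide because their orbits approach each other. Conversely, if \<open>u\<close> is a common fixed point
  then every orbit converges to \<open>u\<close>, and orbital continuity is immediate.
\<close>

section \<open>Inverses in unital Banach algebras\<close>

definition alg_inverse :: "'a::ring_1 \<Rightarrow> 'a" where
  "alg_inverse a = (THE b. a * b = 1 \<and> b * a = 1)"

lemma two_sided_inverse_unique:
  fixes a :: "'a::ring_1"
  assumes "a * b = 1" "b * a = 1" "a * c = 1" "c * a = 1"
  shows "b = c"
proof -
  have "b = b * (a * c)" using assms by simp
  also have "\<dots> = (b * a) * c" by (simp add: mult.assoc)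
  finally show ?thesis using assms by simp
qed

lemma alg_inverse_unique:
  fixes a :: "'a::ring_1"
  assumes "a * b = 1" "b * a = 1"
  shows "alg_inverse a = b"
  unfolding alg_inverse_def using assms two_sided_inverse_unique by blast

lemma alg_invertibleI:
  fixes a :: "'a::ring_1"
  shows "a * b = 1 \<Longrightarrow> b * a = 1 \<Longrightarrow> alg_invertible a"
  unfolding alg_invertible_def by blast

lemma
  fixes a :: "'a::ring_1"
  assumes "alg_invertible a"
  shows right_alg_inverse: "a * alg_inverse a = 1"
    and left_alg_inverse: "alg_inverse a * a = 1"
proof -
  obtain b where b: "a * b = 1" "b * a = 1"
    using assms unfolding alg_invertible_def by blast
  then have "alg_inverse a = b"
    by (rule alg_inverse_unique)
  with b show "a * alg_inverse a = 1" "alg_inverse a * a = 1"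
    by simp_all
qed

lemma alg_invertible_mult:
  fixes a b :: "'a::ring_1"
  assumes "alg_invertible a" "alg_invertible b"
  shows "alg_invertible (a * b)"
proof (rule alg_invertibleI)
  have "(a * b) * (alg_inverse b * alg_inverse a) = a * (b * alg_inverse b) * alg_inverse a"
    by (simp add: mult.assoc)
  then show "(a * b) * (alg_inverse b * alg_inverse a) = 1"
    by (simp add: right_alg_inverse assms)
  have "(alg_inverse b * alg_inverse a) * (a * b) = alg_inverse b * (alg_inverse a * a) * b"
    by (simp add: mult.assoc)
  then show "(alg_inverse b * alg_inverse a) * (a * b) = 1"
    by (simp add: left_alg_inverse assms)
qed

lemma alg_invertible_minus_iff:
  fixes a :: "'a::ring_1"
  shows "alg_invertible (- a) \<longleftrightarrow> alg_invertible a"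
  unfolding alg_invertible_def by (metis minus_mult_minus minus_minus)

lemma alg_invertible_one [simp]: "alg_invertible (1::'a::ring_1)"
  by (rule alg_invertibleI[of 1 1]) simp_all

lemma alg_inverse_one [simp]: "alg_inverse (1::'a::ring_1) = 1"
  by (rule alg_inverse_unique) simp_all

lemma alg_inverse_commute:
  fixes a x :: "'a::ring_1"
  assumes "alg_invertible a" "x * a = a * x"
  shows "x * alg_inverse a = alg_inverse a * x"
proof -
  have "x * alg_inverse a = (alg_inverse a * a) * x * alg_inverse a"
    by (simp add: left_alg_inverse assms(1))
  also have "\<dots> = alg_inverse a * (x * a) * alg_inverse a"
    by (simp add: assms(2) mult.assoc)
  also have "\<dots> = alg_inverse a * x"
    by (simp add: right_alg_inverse assms(1) mult.assoc)
  finally show ?thesis .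
qed

lemma power_mult_commuting:
  fixes a b :: "'a::monoid_mult"
  assumes "a * b = b * a"
  shows "(a * b) ^ n = a ^ n * b ^ n"
proof (induction n)
  case (Suc n)
  have "(a * b) ^ Suc n = a * (b * a ^ n) * b ^ n"
    by (simp add: Suc mult.assoc)
  also have "\<dots> = a * (a ^ n * b) * b ^ n"
    by (simp only: power_commuting_commutes[OF assms])
  also have "\<dots> = a ^ Suc n * b ^ Suc n"
    by (simp add: mult.assoc)
  finally show ?case .
qed simp

lemma geometric_expansion:
  fixes x f :: "'a::ring_1"
  assumes "f = 1 + x * f"
  shows "f = (\<Sum>m<n. x ^ m) + x ^ n * f"
proof (induction n)
  case (Suc n)
  have "x ^ n * f = x ^ n + x ^ Suc n * f"
    by (subst assms) (simp only: distrib_left mult_1_right power_Suc2 mult.assoc)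
  with Suc show ?case
    by (simp add: add.assoc)
qed simp

lemma neumann_series:
  fixes x :: "'a::{real_normed_algebra_1,banach}"
  assumes "norm x < 1"
  shows "alg_invertible (1 - x)"
    and "norm (alg_inverse (1 - x) - 1 - x) \<le> (norm x)\<^sup>2 / (1 - norm x)"
proof -
  define s where "s = (\<Sum>n. x ^ n)"
  have sums: "(\<lambda>n. x ^ n) sums s"
    unfolding s_def using complete_algebra_summable_geometric[OF assms] by (rule summable_sums)
  have "(\<lambda>n. x ^ Suc n) sums (s - 1)"
    using sums_split_initial_segment[OF sums, of 1] by simp
  then have xs: "x * s = s - 1" and "s * x = s - 1"
    using sums_unique2 sums_mult[OF sums, of x] sums_mult2[OF sums, of x]
    by (simp_all add: power_commutes)
  then have l: "(1 - x) * s = 1" and r: "s * (1 - x) = 1"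
    by (simp_all add: algebra_simps)
  show "alg_invertible (1 - x)"
    using l r by (rule alg_invertibleI)
  have inv: "alg_inverse (1 - x) = s"
    using l r by (rule alg_inverse_unique)
  have "norm s \<le> (\<Sum>n. norm x ^ n)"
    unfolding s_def using assms by (intro norm_suminf_le) (auto simp: norm_power_ineq)
  also have "\<dots> = 1 / (1 - norm x)"
    using suminf_geometric[of "norm x"] assms by simp
  finally have ns: "norm s \<le> 1 / (1 - norm x)" .
  have "alg_inverse (1 - x) - 1 - x = x * x * s"
    using xs by (simp add: inv mult.assoc right_diff_distrib)
  also have "norm \<dots> \<le> norm (x * x) * norm s"
    by (rule norm_mult_ineq)
  also have "\<dots> \<le> norm x * norm x * norm s"
    by (intro mult_right_mono norm_mult_ineq norm_ge_zero)
  also have "\<dots> \<le> norm x * norm x * (1 / (1 - norm x))"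
    by (intro mult_left_mono ns) auto
  finally show "norm (alg_inverse (1 - x) - 1 - x) \<le> (norm x)\<^sup>2 / (1 - norm x)"
    by (simp add: power2_eq_square)
qed

lemma alg_inverse_add:
  fixes a h :: "'a::{real_normed_algebra_1,banach}"
  assumes inv: "alg_invertible a" and small: "norm (alg_inverse a) * norm h < 1"
  shows "alg_invertible (a + h)"
    and "alg_inverse (a + h) = alg_inverse (1 - - (alg_inverse a * h)) * alg_inverse a"
proof -
  define b where "b = alg_inverse a"
  define x where "x = - (b * h)"
  have ab: "a * b = 1" "b * a = 1"
    using inv b_def by (simp_all add: right_alg_inverse left_alg_inverse)
  have "norm x < 1"
    using small norm_mult_ineq[of b h] by (simp add: x_def b_def)
  then have u: "(1 - x) * alg_inverse (1 - x) = 1" "alg_inverse (1 - x) * (1 - x) = 1"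
    using neumann_series(1) right_alg_inverse left_alg_inverse by blast+
  have ah: "a + h = a * (1 - x)"
    unfolding x_def using ab by (simp add: distrib_left mult.assoc[symmetric])
  have "(a + h) * (alg_inverse (1 - x) * b) = a * ((1 - x) * alg_inverse (1 - x)) * b"
    unfolding ah by (simp add: mult.assoc)
  then have e1: "(a + h) * (alg_inverse (1 - x) * b) = 1"
    using u ab by simp
  have "(alg_inverse (1 - x) * b) * (a + h) = alg_inverse (1 - x) * (b * a) * (1 - x)"
    unfolding ah by (simp add: mult.assoc)
  then have e2: "(alg_inverse (1 - x) * b) * (a + h) = 1"
    using u ab by simp
  show "alg_invertible (a + h)"
    using e1 e2 by (rule alg_invertibleI)
  show "alg_inverse (a + h) = alg_inverse (1 - - (alg_inverse a * h)) * alg_inverse a"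
    using alg_inverse_unique[OF e1 e2] by (simp add: x_def b_def)
qed

lemma alg_inverse_add_remainder:
  fixes a h :: "'a::{real_normed_algebra_1,banach}"
  assumes inv: "alg_invertible a" and small: "2 * (norm (alg_inverse a) * norm h) \<le> 1"
  shows "norm (alg_inverse (a + h) - alg_inverse a + alg_inverse a * h * alg_inverse a)
           \<le> 2 * norm (alg_inverse a) ^ 3 * (norm h)\<^sup>2"
proof -
  define b where "b = alg_inverse a"
  define x where "x = - (b * h)"
  have nx: "norm x \<le> norm b * norm h"
    unfolding x_def by (simp add: norm_mult_ineq)
  then have "norm x \<le> 1/2"
    using small b_def by simp
  have "norm (alg_inverse a) * norm h < 1"
    using small by simp
  then have "alg_inverse (a + h) = alg_inverse (1 - x) * b"
    unfolding x_def b_def by (rule alg_inverse_add(2)[OF inv])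
  then have "alg_inverse (a + h) - b + b * h * b = (alg_inverse (1 - x) - 1 - x) * b"
    by (simp add: x_def algebra_simps)
  also have "norm \<dots> \<le> norm (alg_inverse (1 - x) - 1 - x) * norm b"
    by (rule norm_mult_ineq)
  also have "\<dots> \<le> (norm x)\<^sup>2 / (1 - norm x) * norm b"
    using neumann_series(2)[of x] \<open>norm x \<le> 1/2\<close> by (intro mult_right_mono) simp_all
  also have "\<dots> \<le> (norm b * norm h)\<^sup>2 / (1/2) * norm b"
    using nx \<open>norm x \<le> 1/2\<close> by (intro mult_right_mono frac_le power_mono) auto
  finally show ?thesis
    by (simp add: b_def power2_eq_square power3_eq_cube algebra_simps)
qed

lemma has_derivative_alg_inverse:
  fixes a :: "'a::{real_normed_algebra_1,banach}"
  assumes inv: "alg_invertible a"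
  shows "(alg_inverse has_derivative (\<lambda>h. - (alg_inverse a * h * alg_inverse a))) (at a within S)"
  unfolding has_derivative_iff_norm
proof
  show "bounded_linear (\<lambda>h. - (alg_inverse a * h * alg_inverse a))"
    by (intro bounded_linear_minus bounded_linear_mult_const bounded_linear_mult_right)
  define B where "B = norm (alg_inverse a)"
  have remainder: "norm (alg_inverse y - alg_inverse a - - (alg_inverse a * (y - a) * alg_inverse a))
      / norm (y - a) \<le> norm (y - a) * (2 * B ^ 3)"
    if "y \<noteq> a" "norm (y - a) < 1 / (2 * (B + 1))" for y
  proof -
    have "0 < 2 * (B + 1)"
      by (simp add: B_def add_nonneg_pos)
    then have "norm (y - a) * (2 * (B + 1)) < 1"
      using that(2) by (simp add: pos_less_divide_eq)
    then have "2 * (B * norm (y - a)) + 2 * norm (y - a) < 1"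
      by (simp add: algebra_simps)
    then have "2 * (B * norm (y - a)) \<le> 1"
      using norm_ge_zero[of "y - a"] by linarith
    then have "norm (alg_inverse (a + (y - a)) - alg_inverse a
        + alg_inverse a * (y - a) * alg_inverse a) \<le> 2 * B ^ 3 * (norm (y - a))\<^sup>2"
      using alg_inverse_add_remainder[OF inv, of "y - a"] by (simp add: B_def)
    then show ?thesis
      using that by (simp add: divide_le_eq power2_eq_square algebra_simps)
  qed
  show "((\<lambda>y. norm (alg_inverse y - alg_inverse a - - (alg_inverse a * (y - a) * alg_inverse a))
      / norm (y - a)) \<longlongrightarrow> 0) (at a within S)"
  proof (rule tendsto_0_le[where K = "2 * B ^ 3"])
    show "((\<lambda>y. y - a) \<longlongrightarrow> 0) (at a within S)"
      by (intro tendsto_eq_intros) auto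
    show "\<forall>\<^sub>F y in at a within S.
        norm (norm (alg_inverse y - alg_inverse a - - (alg_inverse a * (y - a) * alg_inverse a))
          / norm (y - a)) \<le> norm (y - a) * (2 * B ^ 3)"
      unfolding eventually_at using remainder
      by (intro exI[of _ "1 / (2 * (B + 1))"]) (auto simp: dist_norm B_def add_nonneg_pos)
  qed
qed

lemma continuous_on_alg_inverse:
  "continuous_on {a::'a::{real_normed_algebra_1,banach}. alg_invertible a} alg_inverse"
  using has_derivative_alg_inverse has_derivative_continuous continuous_at_imp_continuous_on
  by (metis mem_Collect_eq)

section \<open>Involution and spectrum in a unital C*-algebra\<close>

text \<open>\<open>cemb J c\<close> is the scalar \<open>c I\<close> of the algebra, viewed as complex via \<open>J = i I\<close>.\<close>

definition cemb :: "'a::real_normed_algebra_1 \<Rightarrow> complex \<Rightarrow> 'a" where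
  "cemb J c = Re c *\<^sub>R 1 + Im c *\<^sub>R J"

lemma cmul_eq_cemb_mult: "cmul J c x = cemb J c * x"
  unfolding cmul_def cemb_def by (simp add: distrib_right)

lemma cemb_add: "cemb J (c + e) = cemb J c + cemb J e"
  unfolding cemb_def by (simp add: scaleR_add_left)

lemma cemb_diff: "cemb J (c - e) = cemb J c - cemb J e"
  unfolding cemb_def by (simp add: scaleR_diff_left)

lemma cemb_minus: "cemb J (- c) = - cemb J c"
  unfolding cemb_def by simp

lemma cemb_zero [simp]: "cemb J 0 = 0"
  and cemb_one [simp]: "cemb J 1 = 1"
  and cemb_ii [simp]: "cemb J \<i> = J"
  and cemb_of_real [simp]: "cemb J (complex_of_real r) = r *\<^sub>R 1"
  unfolding cemb_def by simp_all

locale cstar_algebra =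
  fixes J :: "'a::{real_normed_algebra_1,banach}" and star :: "'a \<Rightarrow> 'a"
  assumes unital_cstar_algebra: "unital_cstar_algebra J star"
begin

lemma J_commute: "J * x = x * J"
  and J_squared: "J * J = - 1"
  and norm_cmul: "norm (cmul J c x) = cmod c * norm x"
  and star_star [simp]: "star (star x) = x"
  and star_add: "star (x + y) = star x + star y"
  and star_cmul: "star (cmul J c x) = cmul J (cnj c) (star x)"
  and star_mult: "star (x * y) = star y * star x"
  and cstar_identity: "norm (star x * x) = (norm x)\<^sup>2"
  using unital_cstar_algebra unfolding unital_cstar_algebra_def by blast+

lemma cemb_commute: "cemb J c * x = x * cemb J c"
  unfolding cemb_def by (simp add: distrib_right distrib_left J_commute)

lemma cemb_mult: "cemb J (c * e) = cemb J c * cemb J e"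
proof -
  have "cemb J c * cemb J e = (Re c * Re e) *\<^sub>R 1 + (Re c * Im e + Im c * Re e) *\<^sub>R J
      + (Im c * Im e) *\<^sub>R (J * J)"
    unfolding cemb_def by (simp add: algebra_simps)
  then show ?thesis
    unfolding J_squared cemb_def by (simp add: algebra_simps)
qed

lemma cemb_power: "cemb J (c ^ n) = cemb J c ^ n"
  by (induction n) (simp_all add: cemb_mult)

lemma norm_cemb_mult: "norm (cemb J c * x) = cmod c * norm x"
  using norm_cmul by (simp add: cmul_eq_cemb_mult)

lemma cemb_mult_inverse: "c \<noteq> 0 \<Longrightarrow> cemb J c * cemb J (inverse c) = 1"
  by (simp flip: cemb_mult)

lemma alg_invertible_cemb: "c \<noteq> 0 \<Longrightarrow> alg_invertible (cemb J c)"
  using cemb_mult_inverse cemb_commute by (metis alg_invertibleI)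

lemma star_cemb_mult: "star (cemb J c * x) = cemb J (cnj c) * star x"
  using star_cmul by (simp add: cmul_eq_cemb_mult)

lemma star_one [simp]: "star 1 = 1"
  using star_mult[of "star 1" 1] by simp

lemma star_zero [simp]: "star 0 = 0"
  using star_add[of 0 0] by simp

lemma star_minus: "star (- x) = - star x"
  using minus_unique[of "star x" "star (- x)"] star_add[of x "- x"] by simp

lemma star_diff: "star (x - y) = star x - star y"
  using star_add[of x "- y"] by (simp add: star_minus)

lemma star_scaleR: "star (r *\<^sub>R x) = r *\<^sub>R star x"
  using star_cemb_mult[of "complex_of_real r" x] by simp

lemma star_J: "star J = - J"
  using star_cemb_mult[of \<i> 1] by (simp add: cemb_minus)

lemma star_power: "star (x ^ n) = star x ^ n"
  by (induction n) (simp_all add: star_mult power_commutes)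

lemma norm_star: "norm (star x) = norm x"
proof -
  have le: "norm y \<le> norm (star y)" for y
  proof (cases "y = 0")
    case False
    have "(norm y)\<^sup>2 \<le> norm (star y) * norm y"
      using cstar_identity[of y] norm_mult_ineq[of "star y" y] by simp
    with False show ?thesis
      by (simp add: power2_eq_square)
  qed simp
  show ?thesis
    using le[of x] le[of "star x"] by simp
qed

lemma cspectrum_iff: "c \<in> cspectrum J a \<longleftrightarrow> \<not> alg_invertible (a - cemb J c)"
  unfolding cspectrum_def by (simp add: cmul_eq_cemb_mult)

lemma norm_le_if_in_cspectrum:
  assumes "c \<in> cspectrum J a"
  shows "cmod c \<le> norm a"
proof (rule ccontr)
  assume "\<not> cmod c \<le> norm a"
  then have lt: "norm a < cmod c" and c0: "c \<noteq> 0"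
    by auto
  let ?x = "cemb J (inverse c) * a"
  have "norm ?x < 1"
    using lt c0 by (simp add: norm_cemb_mult norm_divide field_simps)
  then have "alg_invertible (cemb J c * (1 - ?x))"
    using alg_invertible_cemb[OF c0] by (intro alg_invertible_mult neumann_series(1))
  moreover have "cemb J c * (1 - ?x) = - (a - cemb J c)"
    using cemb_mult_inverse[OF c0] by (simp add: right_diff_distrib mult.assoc[symmetric])
  ultimately show False
    using assms by (metis cspectrum_iff alg_invertible_minus_iff)
qed

text \<open>If \<open>c \<in> \<sigma>(h)\<close> then \<open>c + it \<in> \<sigma>(h + tJ)\<close>, while the C*-identity gives
  \<open>\<parallel>h + tJ\<parallel>\<^sup>2 \<le> \<parallel>h\<parallel>\<^sup>2 + t\<^sup>2\<close>; for large \<open>t\<close> of the sign of \<open>Im c\<close> this is impossible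
  unless \<open>Im c = 0\<close>.\<close>

lemma cspectrum_selfadjoint_real:
  assumes sa: "star h = h" and c: "c \<in> cspectrum J h"
  shows "Im c = 0"
proof (rule ccontr)
  assume nz: "Im c \<noteq> 0"
  have key: "(Re c)\<^sup>2 + (Im c + t)\<^sup>2 \<le> (norm h)\<^sup>2 + t\<^sup>2" for t :: real
  proof -
    define g where "g = h + t *\<^sub>R J"
    have "g - cemb J (c + \<i> * complex_of_real t) = h - cemb J c"
      unfolding g_def cemb_add cemb_mult by simp
    then have norm_g: "cmod (c + \<i> * complex_of_real t) \<le> norm g"
      using c by (intro norm_le_if_in_cspectrum) (simp add: cspectrum_iff)
    have "star g * g = h * h + (t * t) *\<^sub>R 1"
      unfolding g_def star_add star_scaleR star_J sa
      by (simp add: algebra_simps J_squared J_commute[of h])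
    then have norm_g2: "(norm g)\<^sup>2 = norm (h * h + (t * t) *\<^sub>R 1)"
      using cstar_identity[of g] by simp
    have "(Re c)\<^sup>2 + (Im c + t)\<^sup>2 = (cmod (c + \<i> * complex_of_real t))\<^sup>2"
      by (simp add: cmod_power2)
    also have "\<dots> \<le> (norm g)\<^sup>2"
      using norm_g by (intro power_mono) auto
    also have "\<dots> \<le> (norm h)\<^sup>2 + t\<^sup>2"
      unfolding norm_g2
      using norm_triangle_ineq[of "h * h" "(t * t) *\<^sub>R 1"] norm_mult_ineq[of h h]
      by (simp add: power2_eq_square)
    finally show ?thesis .
  qed
  define t where "t = ((norm h)\<^sup>2 + 1) / (2 * Im c)"
  have "2 * Im c * t = (norm h)\<^sup>2 + 1"
    using nz unfolding t_def by simp
  moreover have "(Im c + t)\<^sup>2 = (Im c)\<^sup>2 + 2 * Im c * t + t\<^sup>2"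
    by (simp add: power2_eq_square algebra_simps)
  ultimately show False
    using key[of t] by (smt (verit) zero_le_power2)
qed

lemma cspectrum_shift:
  "c \<in> cspectrum J (t *\<^sub>R 1 - a) \<longleftrightarrow> complex_of_real t - c \<in> cspectrum J a"
proof -
  have "t *\<^sub>R 1 - a - cemb J c = - (a - cemb J (complex_of_real t - c))"
    by (simp add: cemb_diff)
  then show ?thesis
    by (simp only: cspectrum_iff alg_invertible_minus_iff)
qed

section \<open>Cauchy estimates for the resolvent\<close>

definition cis_alg :: "real \<Rightarrow> 'a" where
  "cis_alg t = cemb J (cis t)"

lemma cis_alg_eq: "cis_alg t = cos t *\<^sub>R 1 + sin t *\<^sub>R J"
  unfolding cis_alg_def cemb_def by simp

lemma cis_alg_mult: "cis_alg a * cis_alg b = cis_alg (a + b)"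
  unfolding cis_alg_def by (simp flip: cemb_mult add: cis_mult)

lemma cis_alg_zero [simp]: "cis_alg 0 = 1"
  unfolding cis_alg_def by simp

lemma cis_alg_power: "cis_alg t ^ m = cis_alg (real m * t)"
  unfolding cis_alg_def by (simp flip: cemb_power add: Complex.DeMoivre)

lemma cis_alg_commute: "cis_alg t * x = x * cis_alg t"
  unfolding cis_alg_def by (rule cemb_commute)

lemma norm_cis_alg_mult: "norm (cis_alg t * x) = norm x"
  unfolding cis_alg_def by (simp add: norm_cemb_mult)

lemma cis_alg_2pi [simp]: "cis_alg (2 * pi) = 1"
  unfolding cis_alg_eq by simp

lemma has_vector_derivative_cis_alg:
  "(cis_alg has_vector_derivative (J * cis_alg t)) (at t within V)"
proof -
  have "((\<lambda>t. cos t *\<^sub>R (1::'a) + sin t *\<^sub>R J) has_vector_derivative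
      (- sin t) *\<^sub>R 1 + cos t *\<^sub>R J) (at t within V)"
    by (auto intro!: derivative_eq_intros)
  moreover have "(- sin t) *\<^sub>R 1 + cos t *\<^sub>R J = J * cis_alg t"
    unfolding cis_alg_eq by (simp add: distrib_left J_squared)
  ultimately show ?thesis
    unfolding cis_alg_eq[abs_def] by simp
qed

lemma has_integral_cis_alg_multiple:
  assumes "k \<noteq> 0"
  shows "((\<lambda>t. cis_alg (of_int k * t)) has_integral 0) {0..2*pi}"
proof -
  define A where "A t = (1 / of_int k) *\<^sub>R (sin (of_int k * t) *\<^sub>R 1 - cos (of_int k * t) *\<^sub>R J)"
    for t :: real
  have "(A has_vector_derivative cis_alg (of_int k * t)) (at t within {0..2*pi})" for t
  proof -
    have "(A has_vector_derivative (1 / of_int k) *\<^sub>R ((of_int k * cos (of_int k * t)) *\<^sub>R 1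
        - (- (of_int k * sin (of_int k * t))) *\<^sub>R J)) (at t within {0..2*pi})"
      unfolding A_def by (auto intro!: derivative_eq_intros simp: mult.commute)
    then show ?thesis
      using assms by (simp add: cis_alg_eq scaleR_add_right)
  qed
  then have "((\<lambda>t. cis_alg (of_int k * t)) has_integral (A (2*pi) - A 0)) {0..2*pi}"
    by (intro fundamental_theorem_of_calculus) auto
  moreover have "A (2*pi) = A 0"
    unfolding A_def using sin_int_2pin[of k] cos_int_2pin[of k]
    by (simp add: mult.commute mult.left_commute)
  ultimately show ?thesis
    by simp
qed

definition circle_resolvent :: "'a \<Rightarrow> real \<Rightarrow> real \<Rightarrow> 'a" where
  "circle_resolvent y s t = alg_inverse (1 - s *\<^sub>R (cis_alg t * y))"

definition circle_resolvent_deriv :: "'a \<Rightarrow> real \<Rightarrow> real \<Rightarrow> 'a" where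
  "circle_resolvent_deriv y s t =
     circle_resolvent y s t * (cis_alg t * y) * circle_resolvent y s t"

context
  fixes R :: real and y :: 'a
  assumes R_pos: "R > 0"
    and invertible_disc: "\<And>\<mu>. cmod \<mu> \<le> R \<Longrightarrow> alg_invertible (1 - cemb J \<mu> * y)"
begin

lemma invertible_on_circle:
  assumes "\<bar>s\<bar> \<le> R"
  shows "alg_invertible (1 - s *\<^sub>R (cis_alg t * y))"
proof -
  have "cemb J (complex_of_real s * cis t) * y = s *\<^sub>R (cis_alg t * y)"
    unfolding cemb_mult cis_alg_def by (simp add: mult.assoc)
  then show ?thesis
    using assms invertible_disc[of "complex_of_real s * cis t"] by (simp add: norm_mult)
qed

lemma continuous_on_circle_resolvent:
  assumes "\<And>p. p \<in> V \<Longrightarrow> \<bar>fst p\<bar> \<le> R"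
  shows "continuous_on V (\<lambda>p. circle_resolvent y (fst p) (snd p))"
  unfolding circle_resolvent_def
proof (rule continuous_on_compose2[OF continuous_on_alg_inverse])
  show "continuous_on V (\<lambda>p. 1 - fst p *\<^sub>R (cis_alg (snd p) * y))"
    unfolding cis_alg_eq by (intro continuous_intros)
qed (use assms invertible_on_circle in auto)

lemma circle_resolvent_radial_derivative:
  assumes "\<bar>s\<bar> \<le> R"
  shows "((\<lambda>s. circle_resolvent y s t) has_vector_derivative circle_resolvent_deriv y s t)
           (at s within U)"
proof -
  have "((\<lambda>s. 1 - s *\<^sub>R (cis_alg t * y)) has_derivative (\<lambda>h. - (h *\<^sub>R (cis_alg t * y))))
      (at s within U)"
    by (auto intro!: derivative_eq_intros)
  from has_derivative_compose[OF this has_derivative_alg_inverse[OF invertible_on_circle[OF assms]]]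
  show ?thesis
    unfolding has_vector_derivative_def circle_resolvent_deriv_def circle_resolvent_def
    by (rule has_derivative_eq_rhs) (simp add: fun_eq_iff)
qed

text \<open>Since \<open>d/dt e^(it) = J e^(it)\<close> and \<open>J\<close> is central, the angular derivative is \<open>s J\<close>
  times the radial one.\<close>

lemma circle_resolvent_angular_derivative:
  assumes "\<bar>s\<bar> \<le> R"
  shows "((\<lambda>t. circle_resolvent y s t) has_vector_derivative s *\<^sub>R (J * circle_resolvent_deriv y s t))
           (at t within V)"
proof -
  let ?G = "1 - s *\<^sub>R (cis_alg t * y)"
  have "((\<lambda>t. 1 - s *\<^sub>R (cis_alg t * y)) has_vector_derivative - (s *\<^sub>R (J * cis_alg t * y)))
      (at t within V)"
    by (auto intro!: derivative_eq_intros has_vector_derivative_mult_left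
        has_vector_derivative_cis_alg)
  then have "((\<lambda>t. 1 - s *\<^sub>R (cis_alg t * y)) has_derivative
      (\<lambda>h. h *\<^sub>R - (s *\<^sub>R (J * cis_alg t * y)))) (at t within V)"
    by (simp add: has_vector_derivative_def)
  from has_derivative_compose[OF this has_derivative_alg_inverse[OF invertible_on_circle[OF assms]]]
  have "((\<lambda>t. circle_resolvent y s t) has_derivative
      (\<lambda>h. h *\<^sub>R (s *\<^sub>R (alg_inverse ?G * J * (cis_alg t * y) * alg_inverse ?G)))) (at t within V)"
    unfolding circle_resolvent_def
    by (rule has_derivative_eq_rhs) (simp add: fun_eq_iff mult.assoc)
  moreover have "J * ?G = ?G * J"
    by (simp add: right_diff_distrib left_diff_distrib J_commute[of "cis_alg t * y"])
  then have "alg_inverse ?G * J = J * alg_inverse ?G"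
    using alg_inverse_commute[OF invertible_on_circle[OF assms]] by metis
  ultimately show ?thesis
    unfolding has_vector_derivative_def circle_resolvent_deriv_def circle_resolvent_def
    by (simp add: mult.assoc)
qed

lemma circle_resolvent_deriv_integral_zero:
  assumes "\<bar>s\<bar> \<le> R"
  shows "(circle_resolvent_deriv y s has_integral 0) {0..2*pi}"
proof (cases "s = 0")
  case True
  then have "circle_resolvent_deriv y s = (\<lambda>t. cis_alg t * y)"
    by (simp add: circle_resolvent_deriv_def circle_resolvent_def fun_eq_iff)
  then show ?thesis
    using has_integral_mult_left[OF has_integral_cis_alg_multiple[of 1], of y] by simp
next
  case False
  have "((\<lambda>t. s *\<^sub>R (J * circle_resolvent_deriv y s t)) has_integral
      (circle_resolvent y s (2*pi) - circle_resolvent y s 0)) {0..2*pi}"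
    using circle_resolvent_angular_derivative[OF assms]
    by (intro fundamental_theorem_of_calculus) auto
  moreover have "circle_resolvent y s (2*pi) = circle_resolvent y s 0"
    by (simp add: circle_resolvent_def)
  ultimately have "((\<lambda>t. s *\<^sub>R (J * circle_resolvent_deriv y s t)) has_integral 0) {0..2*pi}"
    by simp
  from has_integral_mult_right[OF this, of "(1 / s) *\<^sub>R (- J)"]
  have "((\<lambda>t. (1 / s) *\<^sub>R (- J) * (s *\<^sub>R (J * circle_resolvent_deriv y s t)))
      has_integral 0) {0..2*pi}"
    by simp
  moreover have "(1 / s) *\<^sub>R (- J) * (s *\<^sub>R (J * circle_resolvent_deriv y s t))
      = circle_resolvent_deriv y s t" for t
  proof -
    have "(1 / s) *\<^sub>R (- J) * (s *\<^sub>R (J * circle_resolvent_deriv y s t))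
        = - ((J * J) * circle_resolvent_deriv y s t)"
      using False by (simp add: mult.assoc)
    then show ?thesis
      by (simp add: J_squared)
  qed
  ultimately show ?thesis
    by simp
qed

lemma integrable_circle_resolvent:
  assumes "\<bar>s\<bar> \<le> R"
  shows "circle_resolvent y s integrable_on cbox 0 (2*pi)"
proof (rule integrable_continuous)
  have "continuous_on ((\<lambda>t. (s, t)) ` cbox 0 (2*pi)) (\<lambda>p. circle_resolvent y (fst p) (snd p))"
    by (rule continuous_on_circle_resolvent) (use assms in auto)
  from continuous_on_compose[OF _ this] show "continuous_on (cbox 0 (2*pi)) (circle_resolvent y s)"
    by (simp add: comp_def continuous_intros)
qed

lemma integral_circle_resolvent_has_derivative_zero:
  assumes "\<bar>s\<bar> \<le> R"
  shows "((\<lambda>s. integral (cbox 0 (2*pi)) (circle_resolvent y s)) has_derivative (\<lambda>h. 0))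
           (at s within {-R..R})"
proof -
  have "continuous_on ({-R..R} \<times> cbox 0 (2*pi)) (\<lambda>p. circle_resolvent y (fst p) (snd p))"
    by (rule continuous_on_circle_resolvent) auto
  then have "continuous_on ({-R..R} \<times> cbox 0 (2*pi)) (\<lambda>(s, t). circle_resolvent_deriv y s t)"
    unfolding circle_resolvent_deriv_def case_prod_beta cis_alg_eq
    by (intro continuous_intros) (simp_all add: cis_alg_eq)
  then have "((\<lambda>s. integral (cbox 0 (2*pi)) (circle_resolvent y s)) has_vector_derivative
      integral (cbox 0 (2*pi)) (circle_resolvent_deriv y s)) (at s within {-R..R})"
    using circle_resolvent_radial_derivative integrable_circle_resolvent assms
    by (intro leibniz_rule_vector_derivative) auto
  moreover have "integral (cbox 0 (2*pi)) (circle_resolvent_deriv y s) = 0"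
    using circle_resolvent_deriv_integral_zero[OF assms] by (simp add: integral_unique)
  ultimately show ?thesis
    by (simp add: has_vector_derivative_def)
qed

lemma has_integral_circle_resolvent:
  assumes "\<bar>s\<bar> \<le> R"
  shows "(circle_resolvent y s has_integral (2 * pi) *\<^sub>R 1) {0..2*pi}"
proof -
  obtain c where c: "\<And>s. s \<in> {-R..R} \<Longrightarrow> integral (cbox 0 (2*pi)) (circle_resolvent y s) = c"
    using has_derivative_zero_constant[of "{-R..R}" "\<lambda>s. integral (cbox 0 (2*pi)) (circle_resolvent y s)"]
      integral_circle_resolvent_has_derivative_zero
    by (auto simp: abs_le_iff)
  have "integral (cbox 0 (2*pi)) (circle_resolvent y 0) = (2 * pi) *\<^sub>R 1"
    unfolding circle_resolvent_def by simp
  then have "integral (cbox 0 (2*pi)) (circle_resolvent y s) = (2 * pi) *\<^sub>R 1"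
    using c[of 0] c[of s] assms R_pos by (simp add: abs_le_iff)
  with integrable_circle_resolvent[OF assms] show ?thesis
    unfolding cbox_interval by (simp add: has_integral_integrable_integral)
qed

lemma power_circle_term:
  "(R *\<^sub>R (cis_alg t * y)) ^ m = R ^ m *\<^sub>R (cis_alg (real m * t) * y ^ m)"
proof -
  have "(R *\<^sub>R (cis_alg t * y)) ^ m = R ^ m *\<^sub>R ((cis_alg t * y) ^ m)"
    by (induction m) (simp_all add: mult.assoc)
  then show ?thesis
    by (simp add: power_mult_commuting[OF cis_alg_commute] cis_alg_power)
qed

lemma twisted_circle_resolvent_expansion:
  "cis_alg (- (real n * t)) * circle_resolvent y R t =
     (\<Sum>m<n. R ^ m *\<^sub>R (cis_alg (of_int (int m - int n) * t) * y ^ m))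
     + R ^ n *\<^sub>R (y ^ n * circle_resolvent y R t)"
proof -
  let ?c = "cis_alg (- (real n * t))" and ?x = "R *\<^sub>R (cis_alg t * y)"
  have power_twist: "?c * ?x ^ m = R ^ m *\<^sub>R (cis_alg (of_int (int m - int n) * t) * y ^ m)" for m
  proof -
    have "?c * ?x ^ m = R ^ m *\<^sub>R ((?c * cis_alg (real m * t)) * y ^ m)"
      unfolding power_circle_term by (simp add: mult.assoc)
    also have "?c * cis_alg (real m * t) = cis_alg (of_int (int m - int n) * t)"
      by (simp add: cis_alg_mult algebra_simps)
    finally show ?thesis .
  qed
  have "circle_resolvent y R t = 1 + ?x * circle_resolvent y R t"
    using right_alg_inverse[OF invertible_on_circle[of R t]] R_pos
    by (simp add: circle_resolvent_def algebra_simps)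
  then have "circle_resolvent y R t = (\<Sum>m<n. ?x ^ m) + ?x ^ n * circle_resolvent y R t"
    by (rule geometric_expansion)
  then have "?c * circle_resolvent y R t =
      ?c * ((\<Sum>m<n. ?x ^ m) + ?x ^ n * circle_resolvent y R t)"
    by (rule arg_cong)
  also have "\<dots> = (\<Sum>m<n. ?c * ?x ^ m) + ?c * ?x ^ n * circle_resolvent y R t"
    by (simp add: distrib_left sum_distrib_left mult.assoc)
  also have "\<dots> = (\<Sum>m<n. R ^ m *\<^sub>R (cis_alg (of_int (int m - int n) * t) * y ^ m))
      + R ^ n *\<^sub>R (y ^ n * circle_resolvent y R t)"
    unfolding power_twist by (simp add: mult.assoc)
  finally show ?thesis .
qed

text \<open>Integrating the expansion above kills every term of the finite sum, leaving only the
  \<open>n\<close>-th coefficient \<open>y^n\<close> of the resolvent.\<close>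

lemma has_integral_twisted_circle_resolvent:
  "((\<lambda>t. cis_alg (- (real n * t)) * circle_resolvent y R t) has_integral
     (2 * pi * R ^ n) *\<^sub>R y ^ n) {0..2*pi}"
proof -
  have "((\<lambda>t. \<Sum>m<n. R ^ m *\<^sub>R (cis_alg (of_int (int m - int n) * t) * y ^ m)) has_integral
      (\<Sum>m<n. R ^ m *\<^sub>R (0::'a))) {0..2*pi}"
  proof (rule has_integral_sum[OF finite_lessThan])
    fix m
    assume "m \<in> {..<n}"
    then have "int m - int n \<noteq> 0"
      by simp
    from has_integral_mult_left[OF has_integral_cis_alg_multiple[OF this], of "y ^ m"]
    show "((\<lambda>t. R ^ m *\<^sub>R (cis_alg (of_int (int m - int n) * t) * y ^ m)) has_integral
        R ^ m *\<^sub>R 0) {0..2*pi}"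
      by (intro has_integral_cmul) simp
  qed
  moreover have "((\<lambda>t. R ^ n *\<^sub>R (y ^ n * circle_resolvent y R t)) has_integral
      R ^ n *\<^sub>R (y ^ n * ((2 * pi) *\<^sub>R 1))) {0..2*pi}"
    using R_pos by (intro has_integral_cmul has_integral_mult_right has_integral_circle_resolvent) simp
  ultimately have "((\<lambda>t. (\<Sum>m<n. R ^ m *\<^sub>R (cis_alg (of_int (int m - int n) * t) * y ^ m))
      + R ^ n *\<^sub>R (y ^ n * circle_resolvent y R t)) has_integral
      (\<Sum>m<n. R ^ m *\<^sub>R (0::'a)) + R ^ n *\<^sub>R (y ^ n * ((2 * pi) *\<^sub>R 1))) {0..2*pi}"
    by (rule has_integral_add)
  then show ?thesis
    unfolding twisted_circle_resolvent_expansion by (simp add: mult.commute)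
qed

lemma cauchy_estimate: "\<exists>M. \<forall>n. R ^ n * norm (y ^ n) \<le> M"
proof -
  have "compact (circle_resolvent y R ` {0..2*pi})"
  proof (rule compact_continuous_image[OF _ compact_Icc])
    have "continuous_on ((\<lambda>t. (R, t)) ` {0..2*pi}) (\<lambda>p. circle_resolvent y (fst p) (snd p))"
      using R_pos by (intro continuous_on_circle_resolvent) auto
    from continuous_on_compose[OF _ this] show "continuous_on {0..2*pi} (circle_resolvent y R)"
      by (simp add: comp_def continuous_intros)
  qed
  then have "bounded (circle_resolvent y R ` {0..2*pi})"
    by (rule compact_imp_bounded)
  then obtain M where M: "\<And>t. t \<in> {0..2*pi} \<Longrightarrow> norm (circle_resolvent y R t) \<le> M"
    unfolding bounded_iff by blast
  have "R ^ n * norm (y ^ n) \<le> M" for n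
  proof -
    have "norm (circle_resolvent y R 0) \<le> M"
      by (rule M) simp
    then have "M \<ge> 0"
      by (rule order_trans[OF norm_ge_zero])
    then have "norm ((2 * pi * R ^ n) *\<^sub>R y ^ n) \<le> M * (2 * pi)"
      using has_integral_bound[OF _ has_integral_twisted_circle_resolvent[of n, folded cbox_interval]] M
      by (simp add: norm_cis_alg_mult)
    then show ?thesis
      using R_pos by (simp add: mult.commute mult.left_commute)
  qed
  then show ?thesis
    by blast
qed

end

section \<open>Positivity and monotonicity of the norm\<close>

lemma selfadjoint_norm_power_2:
  assumes "star h = h"
  shows "norm (h ^ (2 ^ k)) = norm h ^ (2 ^ k)"
proof (induction k)
  case (Suc k)
  let ?g = "h ^ (2 ^ k)"
  have "h ^ (2 ^ Suc k) = star ?g * ?g"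
    using assms by (simp add: star_power power_add[symmetric] mult_2)
  then have "norm (h ^ (2 ^ Suc k)) = (norm ?g)\<^sup>2"
    by (simp add: cstar_identity)
  with Suc show ?case
    by (simp add: power_mult[symmetric] mult.commute)
qed simp

lemma alg_invertible_one_minus_cemb_mult:
  assumes spectral_bound: "\<And>c. c \<in> cspectrum J h \<Longrightarrow> cmod c \<le> r" and small: "cmod \<mu> * r < 1"
  shows "alg_invertible (1 - cemb J \<mu> * h)"
proof (cases "\<mu> = 0")
  case False
  have "r < 1 / cmod \<mu>"
    using small False by (simp add: field_simps)
  also have "\<dots> = cmod (inverse \<mu>)"
    by (metis norm_inverse inverse_eq_divide)
  finally have "inverse \<mu> \<notin> cspectrum J h"
    using spectral_bound by force
  then have "alg_invertible ((- cemb J \<mu>) * (h - cemb J (inverse \<mu>)))"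
    using alg_invertible_cemb[of "- \<mu>"] False
    by (intro alg_invertible_mult) (simp_all add: cspectrum_iff cemb_minus)
  moreover have "(- cemb J \<mu>) * (h - cemb J (inverse \<mu>)) = 1 - cemb J \<mu> * h"
    using cemb_mult_inverse[OF False] by (simp add: right_diff_distrib)
  ultimately show ?thesis
    by simp
qed simp

text \<open>For self-adjoint \<open>h\<close> the norm is at most the spectral radius: if \<open>\<sigma>(h)\<close> lies in the disc
  of radius \<open>r < \<parallel>h\<parallel>\<close>, the Cauchy estimate on a circle of radius \<open>R > 1/\<parallel>h\<parallel>\<close> bounds
  \<open>R^n \<parallel>h^n\<parallel>\<close>, contradicting \<open>\<parallel>h^(2^k)\<parallel> = \<parallel>h\<parallel>^(2^k)\<close>.\<close>

lemma selfadjoint_norm_le_spectral_bound: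
  assumes sa: "star h = h" and r: "0 \<le> r"
    and spectral_bound: "\<And>c. c \<in> cspectrum J h \<Longrightarrow> cmod c \<le> r"
  shows "norm h \<le> r"
proof (rule ccontr)
  assume "\<not> norm h \<le> r"
  then have hr: "r < norm h"
    by simp
  define R where "R = 2 / (norm h + r)"
  have R_pos: "R > 0" and Rh: "R * norm h > 1"
    using hr r by (simp_all add: R_def field_simps)
  have "R * r < 1"
    using hr r by (simp add: R_def field_simps)
  then have "alg_invertible (1 - cemb J \<mu> * h)" if "cmod \<mu> \<le> R" for \<mu>
    using that r by (intro alg_invertible_one_minus_cemb_mult[OF spectral_bound])
      (auto intro: le_less_trans[OF mult_right_mono])
  then obtain M where M: "\<And>n. R ^ n * norm (h ^ n) \<le> M"
    using cauchy_estimate[OF R_pos] by blast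
  obtain n where n: "M < (R * norm h) ^ n"
    using real_arch_pow[OF Rh] by blast
  also have "\<dots> \<le> (R * norm h) ^ (2 ^ n)"
    using Rh by (intro power_increasing) (auto intro: less_imp_le)
  also have "\<dots> \<le> M"
    using M[of "2 ^ n"] selfadjoint_norm_power_2[OF sa, of n] by (simp add: power_mult_distrib)
  finally show False
    by simp
qed

lemma cpositive_selfadjoint: "cpositive J star p \<Longrightarrow> star p = p"
  unfolding cpositive_def by simp

lemma cpositive_cspectrum: "cpositive J star p \<Longrightarrow> c \<in> cspectrum J p \<Longrightarrow> Im c = 0 \<and> Re c \<ge> 0"
  unfolding cpositive_def by auto

lemma cpositiveI:
  "star p = p \<Longrightarrow> (\<And>c. c \<in> cspectrum J p \<Longrightarrow> Re c \<ge> 0) \<Longrightarrow> cpositive J star p"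
  unfolding cpositive_def using cspectrum_selfadjoint_real by auto

lemma star_shift: "star (t *\<^sub>R 1 - a) = t *\<^sub>R 1 - star a"
  by (simp add: star_diff star_scaleR)

text \<open>As \<open>\<sigma>(t - h) = t - \<sigma>(h) \<subseteq> [0, 2t]\<close>, positivity of \<open>h\<close> means \<open>\<sigma>(t - h) \<subseteq> [-t, t]\<close>,
  which for the self-adjoint \<open>t - h\<close> says \<open>\<parallel>t - h\<parallel> \<le> t\<close>.\<close>

lemma cpositive_iff_norm_shift_le:
  assumes sa: "star h = h" and t: "norm h \<le> t"
  shows "cpositive J star h \<longleftrightarrow> norm (t *\<^sub>R 1 - h) \<le> t"
proof
  assume pos: "cpositive J star h"
  show "norm (t *\<^sub>R 1 - h) \<le> t"
  proof (rule selfadjoint_norm_le_spectral_bound)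
    show "star (t *\<^sub>R 1 - h) = t *\<^sub>R 1 - h"
      using sa by (simp add: star_shift)
    show "0 \<le> t"
      using t norm_ge_zero[of h] by linarith
    fix c
    assume "c \<in> cspectrum J (t *\<^sub>R 1 - h)"
    then have c: "complex_of_real t - c \<in> cspectrum J h"
      by (simp add: cspectrum_shift)
    with pos have "Im c = 0" "Re c \<le> t"
      by (auto dest: cpositive_cspectrum)
    moreover have "cmod (complex_of_real t - c) \<le> t"
      using norm_le_if_in_cspectrum[OF c] t by simp
    ultimately show "cmod c \<le> t"
      by (simp add: cmod_eq_Re)
  qed
next
  assume n: "norm (t *\<^sub>R 1 - h) \<le> t"
  show "cpositive J star h"
  proof (rule cpositiveI[OF sa])
    fix c
    assume c: "c \<in> cspectrum J h"
    have "complex_of_real t - c \<in> cspectrum J (t *\<^sub>R 1 - h)"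
      using c by (simp add: cspectrum_shift)
    then have "cmod (complex_of_real t - c) \<le> norm (t *\<^sub>R 1 - h)"
      by (rule norm_le_if_in_cspectrum)
    then have "cmod (complex_of_real t - c) \<le> t"
      using n by linarith
    then show "Re c \<ge> 0"
      using cspectrum_selfadjoint_real[OF sa c] by (simp add: cmod_eq_Re)
  qed
qed

lemma cpositive_add:
  assumes p: "cpositive J star p" and q: "cpositive J star q"
  shows "cpositive J star (p + q)"
proof -
  have sa: "star (p + q) = p + q"
    using cpositive_selfadjoint[OF p] cpositive_selfadjoint[OF q] by (simp add: star_add)
  have "norm ((norm p + norm q) *\<^sub>R 1 - (p + q))
      \<le> norm (norm p *\<^sub>R 1 - p) + norm (norm q *\<^sub>R 1 - q)"
    using norm_triangle_ineq[of "norm p *\<^sub>R 1 - p" "norm q *\<^sub>R 1 - q"]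
    by (simp add: scaleR_add_left algebra_simps)
  also have "\<dots> \<le> norm p + norm q"
    using cpositive_iff_norm_shift_le[OF cpositive_selfadjoint[OF p] order_refl]
      cpositive_iff_norm_shift_le[OF cpositive_selfadjoint[OF q] order_refl] p q
    by (intro add_mono) simp_all
  finally show ?thesis
    using cpositive_iff_norm_shift_le[OF sa norm_triangle_ineq] by simp
qed

lemma cpositive_norm_shift:
  assumes "star h = h"
  shows "cpositive J star (norm h *\<^sub>R 1 - h)"
proof (rule cpositiveI)
  show "star (norm h *\<^sub>R 1 - h) = norm h *\<^sub>R 1 - h"
    using assms by (simp add: star_shift)
  fix c
  assume "c \<in> cspectrum J (norm h *\<^sub>R 1 - h)"
  then have c: "complex_of_real (norm h) - c \<in> cspectrum J h"
    by (simp add: cspectrum_shift)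
  have "Im c = 0"
    using cspectrum_selfadjoint_real[OF assms c] by simp
  moreover have "cmod (complex_of_real (norm h) - c) \<le> norm h"
    by (rule norm_le_if_in_cspectrum[OF c])
  ultimately show "Re c \<ge> 0"
    by (simp add: cmod_eq_Re)
qed

lemma norm_le_if_cle:
  assumes a: "cpositive J star a" and ab: "cle J star a b"
  shows "norm a \<le> norm b"
proof (rule selfadjoint_norm_le_spectral_bound[OF cpositive_selfadjoint[OF a]])
  have ba: "cpositive J star (b - a)"
    using ab by (simp add: cle_def)
  have "star b = b"
    using cpositive_selfadjoint[OF a] cpositive_selfadjoint[OF ba] star_add[of a "b - a"] by simp
  then have "cpositive J star (norm b *\<^sub>R 1 - a)"
    using cpositive_add[OF cpositive_norm_shift[of b] ba] by simp
  fix c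
  assume c: "c \<in> cspectrum J a"
  then have "complex_of_real (norm b) - c \<in> cspectrum J (norm b *\<^sub>R 1 - a)"
    by (simp add: cspectrum_shift)
  with \<open>cpositive J star (norm b *\<^sub>R 1 - a)\<close> have "Re c \<le> norm b"
    by (auto dest: cpositive_cspectrum)
  then show "cmod c \<le> norm b"
    using cpositive_cspectrum[OF a c] by (simp add: cmod_eq_Re)
qed simp

end

section \<open>Orbits for distances with values in a normed space\<close>

lemma funpow_fixpoint: "f u = u \<Longrightarrow> (f ^^ n) u = u"
  by (induction n) auto

lemma funpow_in_closed: "\<forall>x\<in>X. f x \<in> X \<Longrightarrow> x \<in> X \<Longrightarrow> (f ^^ n) x \<in> X"
  by (induction n) auto

locale norm_distance =
  fixes X :: "'x set" and d :: "'x \<Rightarrow> 'x \<Rightarrow> 'a::real_normed_vector"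
  assumes distance_eq_0_iff: "x \<in> X \<Longrightarrow> y \<in> X \<Longrightarrow> d x y = 0 \<longleftrightarrow> x = y"
    and distance_commute: "x \<in> X \<Longrightarrow> y \<in> X \<Longrightarrow> d x y = d y x"
    and norm_distance_triangle:
      "x \<in> X \<Longrightarrow> y \<in> X \<Longrightarrow> z \<in> X \<Longrightarrow> norm (d x y) \<le> norm (d x z) + norm (d z y)"
begin

lemma distance_limit_unique:
  assumes "\<And>n. z n \<in> X" "a \<in> X" "b \<in> X"
    and "(\<lambda>n. norm (d (z n) a)) \<longlonglongrightarrow> 0" "(\<lambda>n. norm (d (z n) b)) \<longlonglongrightarrow> 0"
  shows "a = b"
proof -
  have le: "norm (d a b) \<le> norm (d (z n) a) + norm (d (z n) b)" for n
    using norm_distance_triangle[of a b "z n"] distance_commute[of a "z n"] assms(1-3) by simp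
  have "(\<lambda>n. norm (d (z n) a) + norm (d (z n) b)) \<longlonglongrightarrow> 0 + 0"
    by (intro tendsto_add assms(4,5))
  then have "norm (d a b) \<le> 0 + 0"
    by (rule LIMSEQ_le_const) (use le in auto)
  then show ?thesis
    using distance_eq_0_iff assms(2,3) by simp
qed

lemma norm_distance_le_sum_steps:
  assumes "\<And>n. s n \<in> X" "m \<le> n"
  shows "norm (d (s m) (s n)) \<le> (\<Sum>i=m..<n. norm (d (s i) (s (Suc i))))"
  using assms(2)
proof (induction n rule: dec_induct)
  case base
  then show ?case
    using distance_eq_0_iff assms(1) by simp
next
  case (step n)
  then show ?case
    using norm_distance_triangle[of "s m" "s (Suc n)" "s n"] assms(1) by simp
qed

lemma cauchy_if_summable_steps:
  assumes s: "\<And>n. s n \<in> X" and summable: "summable (\<lambda>n. norm (d (s n) (s (Suc n))))"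
  shows "\<forall>e>0. \<exists>N. \<forall>n\<ge>N. \<forall>m\<ge>N. norm (d (s n) (s m)) < e"
proof (intro allI impI)
  fix e :: real
  assume "e > 0"
  then obtain N where N: "\<And>m n. m \<ge> N \<Longrightarrow> norm (\<Sum>i=m..<n. norm (d (s i) (s (Suc i)))) < e"
    using summable unfolding summable_Cauchy by blast
  have close: "norm (d (s n) (s m)) < e" if "n \<ge> N" "n \<le> m" for n m
    using norm_distance_le_sum_steps[of s, OF s \<open>n \<le> m\<close>] N[OF \<open>n \<ge> N\<close>, of m]
    by (smt (verit) abs_ge_self real_norm_def)
  show "\<exists>N. \<forall>n\<ge>N. \<forall>m\<ge>N. norm (d (s n) (s m)) < e"
  proof (intro exI allI impI)
    fix n m
    assume "n \<ge> N" "m \<ge> N"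
    then show "norm (d (s n) (s m)) < e"
      using close[of n m] close[of m n] distance_commute[OF s s] by (cases "n \<le> m") auto
  qed
qed

lemma fixed_point_if_orbitally_continuous_at:
  assumes F: "\<forall>x\<in>X. F x \<in> X" and "x \<in> X" "u \<in> X"
    and cont: "orbitally_continuous_at X d F u"
    and lim: "(\<lambda>n. norm (d ((F ^^ n) x) u)) \<longlonglongrightarrow> 0"
  shows "F u = u"
proof (rule distance_limit_unique)
  \<comment> \<open>orbital continuity only speaks about positive indices, hence the shift by one\<close>
  have "strict_mono (Suc :: nat \<Rightarrow> nat) \<and> (\<forall>i. Suc i > 0)"
    by (simp add: strict_mono_Suc_iff)
  then show "(\<lambda>i. norm (d ((F ^^ (Suc i + 1)) x) (F u))) \<longlonglongrightarrow> 0"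
    using cont \<open>x \<in> X\<close> LIMSEQ_Suc[OF lim] unfolding orbitally_continuous_at_def by blast
  have "strict_mono (\<lambda>i. Suc i + 1)"
    by (simp add: strict_mono_Suc_iff)
  from LIMSEQ_subseq_LIMSEQ[OF lim this]
  show "(\<lambda>i. norm (d ((F ^^ (Suc i + 1)) x) u)) \<longlonglongrightarrow> 0"
    by (simp add: comp_def)
qed (use assms funpow_in_closed[OF F] in blast)+

lemma orbitally_continuous_if_orbits_converge:
  assumes F: "\<forall>x\<in>X. F x \<in> X" and "u \<in> X" "F u = u"
    and lim: "\<And>x. x \<in> X \<Longrightarrow> (\<lambda>n. norm (d ((F ^^ n) x) u)) \<longlonglongrightarrow> 0"
  shows "orbitally_continuous X d F"
  unfolding orbitally_continuous_def orbitally_continuous_at_def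
proof (intro ballI allI impI)
  fix v x and ns :: "nat \<Rightarrow> nat"
  assume "v \<in> X" "x \<in> X" and ns: "strict_mono ns \<and> (\<forall>i. 0 < ns i)"
    and lim_v: "(\<lambda>i. norm (d ((F ^^ ns i) x) v)) \<longlonglongrightarrow> 0"
  have "v = u"
  proof (rule distance_limit_unique)
    show "(\<lambda>i. norm (d ((F ^^ ns i) x) u)) \<longlonglongrightarrow> 0"
      using LIMSEQ_subseq_LIMSEQ[OF lim[OF \<open>x \<in> X\<close>], of ns] ns by (simp add: comp_def)
  qed (use assms \<open>v \<in> X\<close> \<open>x \<in> X\<close> lim_v funpow_in_closed in auto)
  moreover have "strict_mono (\<lambda>i. ns i + 1)"
    using ns by (simp add: strict_mono_def)
  from LIMSEQ_subseq_LIMSEQ[OF lim[OF \<open>x \<in> X\<close>] this]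
  show "(\<lambda>i. norm (d ((F ^^ (ns i + 1)) x) (F v))) \<longlonglongrightarrow> 0"
    using \<open>v = u\<close> \<open>F u = u\<close> by (simp add: comp_def)
qed

context
  fixes T S :: "'x \<Rightarrow> 'x" and c r :: "'x \<Rightarrow> 'x \<Rightarrow> real"
  assumes T: "\<forall>x\<in>X. T x \<in> X" and S: "\<forall>x\<in>X. S x \<in> X"
    and rate: "\<And>x y n. x \<in> X \<Longrightarrow> y \<in> X \<Longrightarrow> n \<ge> 1 \<Longrightarrow>
                 norm (d ((T ^^ n) x) ((S ^^ n) y)) \<le> c x y * r x y ^ n"
    and ratio: "\<And>x y. x \<in> X \<Longrightarrow> y \<in> X \<Longrightarrow> \<bar>r x y\<bar> < 1"
begin

lemma orbits_approach:
  assumes "x \<in> X" "y \<in> X"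
  shows "(\<lambda>n. norm (d ((T ^^ n) x) ((S ^^ n) y))) \<longlonglongrightarrow> 0"
proof (rule Lim_null_comparison)
  show "\<forall>\<^sub>F n in sequentially. norm (norm (d ((T ^^ n) x) ((S ^^ n) y))) \<le> c x y * r x y ^ n"
    using rate[OF assms] by (auto simp: eventually_sequentially intro: exI[of _ 1])
  show "(\<lambda>n. c x y * r x y ^ n) \<longlonglongrightarrow> 0"
    using ratio[OF assms] by (intro tendsto_mult_right_zero LIMSEQ_abs_realpow_zero2)
qed

lemma summable_orbit_steps:
  assumes x: "x \<in> X"
  shows "summable (\<lambda>n. norm (d ((T ^^ n) x) ((T ^^ Suc n) x)))"
proof (rule summable_comparison_test'[where N = 1])
  have Tx: "T x \<in> X"
    using T x by simp
  show "summable (\<lambda>n. c x x * r x x ^ n + c (T x) x * r (T x) x ^ n)"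
    using ratio[OF x x] ratio[OF Tx x]
    by (intro summable_add summable_mult summable_geometric) simp_all
  fix n :: nat
  assume "n \<ge> 1"
  have in_X: "(T ^^ n) x \<in> X" "(T ^^ n) (T x) \<in> X" "(S ^^ n) x \<in> X"
    using funpow_in_closed[OF T] funpow_in_closed[OF S] x Tx by blast+
  have "(T ^^ Suc n) x = (T ^^ n) (T x)"
    by (simp only: funpow_Suc_right comp_def)
  then have "norm (d ((T ^^ n) x) ((T ^^ Suc n) x))
      \<le> norm (d ((T ^^ n) x) ((S ^^ n) x)) + norm (d ((S ^^ n) x) ((T ^^ n) (T x)))"
    using norm_distance_triangle[OF in_X(1,2,3)] by simp
  then have "norm (d ((T ^^ n) x) ((T ^^ Suc n) x))
      \<le> norm (d ((T ^^ n) x) ((S ^^ n) x)) + norm (d ((T ^^ n) (T x)) ((S ^^ n) x))"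
    using distance_commute[OF in_X(3,2)] by simp
  also have "\<dots> \<le> c x x * r x x ^ n + c (T x) x * r (T x) x ^ n"
    using rate[OF x x \<open>n \<ge> 1\<close>] rate[OF Tx x \<open>n \<ge> 1\<close>] by (rule add_mono)
  finally show "norm (norm (d ((T ^^ n) x) ((T ^^ Suc n) x)))
      \<le> c x x * r x x ^ n + c (T x) x * r (T x) x ^ n"
    by simp
qed

lemma common_fixed_point_unique:
  assumes "u \<in> X" "T u = u" "S u = u" "v \<in> X" "T v = v" "S v = v"
  shows "v = u"
proof -
  have "(\<lambda>n. norm (d v u)) \<longlonglongrightarrow> 0"
    using orbits_approach[OF \<open>v \<in> X\<close> \<open>u \<in> X\<close>] assms by (simp add: funpow_fixpoint)
  then have "d v u = 0"
    by (simp add: LIMSEQ_const_iff)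
  then show ?thesis
    using distance_eq_0_iff[OF \<open>v \<in> X\<close> \<open>u \<in> X\<close>] by simp
qed

lemma orbits_converge_to_common_fixed_point:
  assumes "u \<in> X" "T u = u" "S u = u" "x \<in> X"
  shows "(\<lambda>n. norm (d ((T ^^ n) x) u)) \<longlonglongrightarrow> 0"
    and "(\<lambda>n. norm (d ((S ^^ n) x) u)) \<longlonglongrightarrow> 0"
  using orbits_approach[of x u] orbits_approach[of u x] assms
    distance_commute[OF funpow_in_closed[OF S assms(4)] assms(1)]
  by (simp_all add: funpow_fixpoint)

lemma T_orbit_converges:
  assumes complete: "cstar_complete X d" and x: "x \<in> X"
  obtains u where "u \<in> X" "(\<lambda>n. norm (d ((T ^^ n) x) u)) \<longlonglongrightarrow> 0"
proof -
  have "\<forall>e>0. \<exists>N. \<forall>n\<ge>N. \<forall>m\<ge>N. norm (d ((T ^^ n) x) ((T ^^ m) x)) < e"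
    by (rule cauchy_if_summable_steps[where s = "\<lambda>n. (T ^^ n) x"])
      (use funpow_in_closed[OF T x] summable_orbit_steps[OF x] in auto)
  then show ?thesis
    using complete[unfolded cstar_complete_def, THEN spec[where x = "\<lambda>n. (T ^^ n) x"]]
      funpow_in_closed[OF T x] that by blast
qed

lemma S_orbit_converges_with_T_orbit:
  assumes x: "x \<in> X" and u: "u \<in> X" and lim: "(\<lambda>n. norm (d ((T ^^ n) x) u)) \<longlonglongrightarrow> 0"
  shows "(\<lambda>n. norm (d ((S ^^ n) x) u)) \<longlonglongrightarrow> 0"
proof (rule Lim_null_comparison)
  have "norm (d ((S ^^ n) x) u) \<le> norm (d ((T ^^ n) x) ((S ^^ n) x)) + norm (d ((T ^^ n) x) u)"
    for n
    using norm_distance_triangle[OF funpow_in_closed[OF S x] u funpow_in_closed[OF T x]]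
      distance_commute[OF funpow_in_closed[OF S x] funpow_in_closed[OF T x]] by simp
  then show "\<forall>\<^sub>F n in sequentially. norm (norm (d ((S ^^ n) x) u))
      \<le> norm (d ((T ^^ n) x) ((S ^^ n) x)) + norm (d ((T ^^ n) x) u)"
    by simp
  show "(\<lambda>n. norm (d ((T ^^ n) x) ((S ^^ n) x)) + norm (d ((T ^^ n) x) u)) \<longlonglongrightarrow> 0"
    using tendsto_add[OF orbits_approach[OF x x] lim] by simp
qed

theorem common_fixed_point_iff_orbitally_continuous:
  assumes complete: "cstar_complete X d" and nonempty: "X \<noteq> {}"
  shows "(orbitally_continuous X d T \<and> orbitally_continuous X d S) \<longleftrightarrow>
         (\<exists>!u. u \<in> X \<and> T u = u \<and> S u = u)"
proof
  assume cont: "orbitally_continuous X d T \<and> orbitally_continuous X d S"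
  obtain x where x: "x \<in> X"
    using nonempty by blast
  obtain u where u: "u \<in> X" and lim_T: "(\<lambda>n. norm (d ((T ^^ n) x) u)) \<longlonglongrightarrow> 0"
    using T_orbit_converges[OF complete x] .
  have "T u = u" "S u = u"
    using fixed_point_if_orbitally_continuous_at[OF T x u _ lim_T]
      fixed_point_if_orbitally_continuous_at[OF S x u _ S_orbit_converges_with_T_orbit[OF x u lim_T]]
      cont u
    unfolding orbitally_continuous_def by simp_all
  with u show "\<exists>!u. u \<in> X \<and> T u = u \<and> S u = u"
    using common_fixed_point_unique by (intro ex1I[of _ u]) auto
next
  assume "\<exists>!u. u \<in> X \<and> T u = u \<and> S u = u"
  then obtain u where u: "u \<in> X" "T u = u" "S u = u"
    by blast
  show "orbitally_continuous X d T \<and> orbitally_continuous X d S"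
    using orbitally_continuous_if_orbits_converge[OF T u(1,2) orbits_converge_to_common_fixed_point(1)[OF u]]
      orbitally_continuous_if_orbits_converge[OF S u(1,3) orbits_converge_to_common_fixed_point(2)[OF u]]
    by blast
qed

end

end

lemma cstar_metricD:
  assumes "cstar_metric J star X d" "x \<in> X" "y \<in> X"
  shows "cpositive J star (d x y)" and "d x y = 0 \<longleftrightarrow> x = y" and "d x y = d y x"
  using assms unfolding cstar_metric_def by blast+

lemma cstar_metric_triangle:
  assumes "cstar_metric J star X d" "x \<in> X" "y \<in> X" "z \<in> X"
  shows "cle J star (d x y) (d x z + d z y)"
proof -
  have "\<forall>x\<in>X. \<forall>y\<in>X. \<forall>z\<in>X. cle J star (d x y) (d x z + d z y)"
    using assms(1) unfolding cstar_metric_def by (elim conjE)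
  with assms(2-4) show ?thesis
    by blast
qed

context cstar_algebra
begin

lemma norm_distance_if_cstar_metric:
  assumes "cstar_metric J star X d"
  shows "norm_distance X d"
proof
  fix x y z
  assume xyz: "x \<in> X" "y \<in> X"
  show "d x y = 0 \<longleftrightarrow> x = y" "d x y = d y x"
    using cstar_metricD(2,3)[OF assms xyz] by simp_all
  assume z: "z \<in> X"
  have "norm (d x y) \<le> norm (d x z + d z y)"
    by (rule norm_le_if_cle[OF cstar_metricD(1)[OF assms xyz] cstar_metric_triangle[OF assms xyz z]])
  then show "norm (d x y) \<le> norm (d x z) + norm (d z y)"
    using norm_triangle_ineq by (rule order_trans)
qed

lemma norm_sandwich_power_le: "norm (star a ^ n * b * a ^ n) \<le> norm b * ((norm a)\<^sup>2) ^ n"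
proof -
  have "norm (star a ^ n * b * a ^ n) \<le> norm (star a ^ n * b) * norm (a ^ n)"
    by (rule norm_mult_ineq)
  also have "\<dots> \<le> norm (star a ^ n) * norm b * norm (a ^ n)"
    by (intro mult_right_mono norm_mult_ineq norm_ge_zero)
  also have "\<dots> \<le> norm a ^ n * norm b * norm a ^ n"
  proof (rule mult_mono[OF mult_right_mono])
    show "norm (star a ^ n) \<le> norm a ^ n"
      using norm_power_ineq[of "star a" n] by (simp add: norm_star)
  qed (simp_all add: norm_power_ineq)
  also have "\<dots> = norm b * ((norm a)\<^sup>2) ^ n"
    by (simp add: power2_eq_square power_mult_distrib)
  finally show ?thesis .
qed

end

theorem theorem3p15:
  fixes J :: "'a::{real_normed_algebra_1,banach}"
    and star :: "'a \<Rightarrow> 'a"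
    and X :: "'x set"
    and d :: "'x \<Rightarrow> 'x \<Rightarrow> 'a"
    and T S :: "'x \<Rightarrow> 'x"
    and q \<delta> :: "'x \<Rightarrow> 'x \<Rightarrow> 'a"
  assumes "unital_cstar_algebra J star"
    and "cstar_metric J star X d"
    and "cstar_complete X d"
    and "\<forall>x\<in>X. T x \<in> X" and "\<forall>x\<in>X. S x \<in> X"
    and "\<forall>x\<in>X. \<forall>y\<in>X. norm (q x y) < 1"
    and "\<forall>x\<in>X. \<forall>y\<in>X. cpositive J star (\<delta> x y)"
    and "\<forall>x\<in>X. \<forall>y\<in>X. \<forall>n::nat. n \<ge> 1 \<longrightarrow>
           cle J star (d ((T ^^ n) x) ((S ^^ n) y)) ((star (q x y)) ^ n * \<delta> x y * (q x y) ^ n)"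
  shows "(orbitally_continuous X d T \<and> orbitally_continuous X d S) \<longleftrightarrow>
         (\<exists>!u. u \<in> X \<and> T u = u \<and> S u = u)"
proof -
  interpret cstar_algebra J star
    by (rule cstar_algebra.intro) fact
  interpret norm_distance X d
    by (rule norm_distance_if_cstar_metric) fact
  have rate: "norm (d ((T ^^ n) x) ((S ^^ n) y)) \<le> norm (\<delta> x y) * ((norm (q x y))\<^sup>2) ^ n"
    if "x \<in> X" "y \<in> X" "n \<ge> 1" for x y n
  proof -
    have "cpositive J star (d ((T ^^ n) x) ((S ^^ n) y))"
      using cstar_metricD(1)[OF assms(2) funpow_in_closed[OF assms(4) that(1)]
          funpow_in_closed[OF assms(5) that(2)]] .
    moreover have "cle J star (d ((T ^^ n) x) ((S ^^ n) y)) (star (q x y) ^ n * \<delta> x y * q x y ^ n)"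
      using assms(8) that by simp
    ultimately have "norm (d ((T ^^ n) x) ((S ^^ n) y)) \<le> norm (star (q x y) ^ n * \<delta> x y * q x y ^ n)"
      by (rule norm_le_if_cle)
    then show ?thesis
      using norm_sandwich_power_le by (rule order_trans)
  qed
  have ratio: "\<bar>(norm (q x y))\<^sup>2\<bar> < 1" if "x \<in> X" "y \<in> X" for x y
    using assms(6) that by (simp add: abs_square_less_1)
  have "X \<noteq> {}"
    using assms(2) unfolding cstar_metric_def by (elim conjE)
  from common_fixed_point_iff_orbitally_continuous[where c = "\<lambda>x y. norm (\<delta> x y)"
      and r = "\<lambda>x y. (norm (q x y))\<^sup>2", OF assms(4,5) rate ratio assms(3) this]
  show ?thesis .
qed

end
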